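(* Let $k$ be a commutative ring, $B\to A$ a morphism of $k$-algebras, and let $t=\sum_is_i\otimes_Bt_i\in(A\otimes_BA)^B$ and $m,u\in A^B$ satisfy: (a) $\sum_is_it_i=1$ and $\sum_{i,j}s_i\otimes_Bt_is_j\otimes_Bt_j=\sum_is_i\otimes_B1\otimes_Bt_i$; (b) $tm=mt^2$; (c) $tu=u\otimes_B1$; (d) $m^2=\sum_ims_imt_i$; (e) $mu=\sum_ims_iut_i=1$. Let $(A\otimes_BA)_t$ denote the $A$-bimodule $A\otimes_BA$ equipped with $\Delta_t(a\otimes_Ba')=\sum_iams_i\otimes_Bt_i\otimes_Ba'$ (viewed in $(A\otimes_BA)\otimes_A(A\otimes_BA)\cong A\otimes_BA\otimes_BA$) and $e_t(a\otimes_Ba')=aua'$. Then the element $mt=\sum_ims_i\otimes_Bt_i$ is group-like in $(A\otimes_BA)_t$, i.e. $e_t(mt)=1$ and $\Delta_t(mt)=mt\otimes_Amt$.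
   Context: $A^B=\{a\in A\mid ba=ab\ \forall b\in B\}$ and $(A\otimes_BA)^B=\{x\in A\otimes_BA\mid bx=xb\ \forall b\in B\}$, using the natural $A$-bimodule structure of $A\otimes_BA$ (so e.g. $tm=\sum_is_i\otimes_Bt_im$ and $mt=\sum_ims_i\otimes_Bt_i$). The product on $(A\otimes_BA)^B$ is $(\sum_is_i\otimes_Bt_i)(\sum_js'_j\otimes_Bt'_j)=\sum_{i,j}s_is'_j\otimes_Bt'_jt_i$; in particular $t^2=\sum_{i,j}s_is_j\otimes_Bt_jt_i$. The isomorphism $(A\otimes_BA)\otimes_A(A\otimes_BA)\cong A\otimes_BA\otimes_BA$ is $a\otimes_Bb\otimes_Ac\otimes_Bd\mapsto a\otimes_Bbc\otimes_Bd$. *)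

theory Defs
  imports "HOL-Library.Poly_Mapping"
begin

definition is_ring_hom :: "('r::ring_1 \<Rightarrow> 's::ring_1) \<Rightarrow> bool" where
  "is_ring_hom g \<longleftrightarrow> g 1 = 1 \<and> (\<forall>x y. g (x + y) = g x + g y) \<and> (\<forall>x y. g (x * y) = g x * g y)"

definition is_alg_struct :: "('k::comm_ring_1 \<Rightarrow> 'r::ring_1) \<Rightarrow> bool" where
  "is_alg_struct \<iota> \<longleftrightarrow> is_ring_hom \<iota> \<and> (\<forall>c x. \<iota> c * x = x * \<iota> c)"

text \<open>Free abelian groups on A x A and A x A x A; generators a (x) c and a (x) b (x) c.\<close>
definition gen2 :: "'a \<Rightarrow> 'a \<Rightarrow> ('a \<times> 'a) \<Rightarrow>\<^sub>0 int" where
  "gen2 a c = Poly_Mapping.single (a, c) 1"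

definition gen3 :: "'a \<Rightarrow> 'a \<Rightarrow> 'a \<Rightarrow> ('a \<times> 'a \<times> 'a) \<Rightarrow>\<^sub>0 int" where
  "gen3 a b c = Poly_Mapping.single (a, b, c) 1"

text \<open>Relation subgroup defining A (x)_B A, where A is a B-bimodule via f : B -> A.\<close>
inductive_set tens2_rel :: "('b::ring_1 \<Rightarrow> 'a::ring_1) \<Rightarrow> (('a \<times> 'a) \<Rightarrow>\<^sub>0 int) set"
  for f where
  zero: "0 \<in> tens2_rel f"
| diff: "x \<in> tens2_rel f \<Longrightarrow> y \<in> tens2_rel f \<Longrightarrow> x - y \<in> tens2_rel f"
| addl: "gen2 (a + a') c - gen2 a c - gen2 a' c \<in> tens2_rel f"
| addr: "gen2 a (c + c') - gen2 a c - gen2 a c' \<in> tens2_rel f"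
| bal: "gen2 (a * f b) c - gen2 a (f b * c) \<in> tens2_rel f"

inductive_set tens3_rel :: "('b::ring_1 \<Rightarrow> 'a::ring_1) \<Rightarrow> (('a \<times> 'a \<times> 'a) \<Rightarrow>\<^sub>0 int) set"
  for f where
  zero: "0 \<in> tens3_rel f"
| diff: "x \<in> tens3_rel f \<Longrightarrow> y \<in> tens3_rel f \<Longrightarrow> x - y \<in> tens3_rel f"
| add1: "gen3 (a + a') c d - gen3 a c d - gen3 a' c d \<in> tens3_rel f"
| add2: "gen3 a (c + c') d - gen3 a c d - gen3 a c' d \<in> tens3_rel f"
| add3: "gen3 a c (d + d') - gen3 a c d - gen3 a c d' \<in> tens3_rel f"
| bal1: "gen3 (a * f b) c d - gen3 a (f b * c) d \<in> tens3_rel f"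
| bal2: "gen3 a (c * f b) d - gen3 a c (f b * d) \<in> tens3_rel f"

definition teq2 :: "('b::ring_1 \<Rightarrow> 'a::ring_1) \<Rightarrow> (('a \<times> 'a) \<Rightarrow>\<^sub>0 int) \<Rightarrow> (('a \<times> 'a) \<Rightarrow>\<^sub>0 int) \<Rightarrow> bool" where
  "teq2 f x y \<longleftrightarrow> x - y \<in> tens2_rel f"

definition teq3 :: "('b::ring_1 \<Rightarrow> 'a::ring_1) \<Rightarrow> (('a \<times> 'a \<times> 'a) \<Rightarrow>\<^sub>0 int) \<Rightarrow> (('a \<times> 'a \<times> 'a) \<Rightarrow>\<^sub>0 int) \<Rightarrow> bool" where
  "teq3 f x y \<longleftrightarrow> x - y \<in> tens3_rel f"

definition counit_t :: "'a::ring_1 \<Rightarrow> (('a \<times> 'a) \<Rightarrow>\<^sub>0 int) \<Rightarrow> 'a" where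
  "counit_t u X = (\<Sum>p\<in>Poly_Mapping.keys X. of_int (Poly_Mapping.lookup X p) * (fst p * u * snd p))"

text \<open>Comultiplication Delta_t(a (x) a') = sum_i a m s_i (x) t_i (x) a', with
  t = sum_{i<n} s_i (x) t_i, landing in A (x)_B A (x)_B A, extended additively.\<close>
definition comult_t :: "'a::ring_1 \<Rightarrow> nat \<Rightarrow> (nat \<Rightarrow> 'a) \<Rightarrow> (nat \<Rightarrow> 'a)
    \<Rightarrow> (('a \<times> 'a) \<Rightarrow>\<^sub>0 int) \<Rightarrow> (('a \<times> 'a \<times> 'a) \<Rightarrow>\<^sub>0 int)" where
  "comult_t m n s t X = (\<Sum>p\<in>Poly_Mapping.keys X. \<Sum>j<n.
      Poly_Mapping.single (fst p * m * s j, t j, snd p) (Poly_Mapping.lookup X p))"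

text \<open>x (x)_A y in (A (x)_B A) (x)_A (A (x)_B A) = A (x)_B A (x)_B A,
  via a (x) b (x) c (x) d |-> a (x) bc (x) d.\<close>
definition tensA :: "(('a::ring_1 \<times> 'a) \<Rightarrow>\<^sub>0 int) \<Rightarrow> (('a \<times> 'a) \<Rightarrow>\<^sub>0 int) \<Rightarrow> (('a \<times> 'a \<times> 'a) \<Rightarrow>\<^sub>0 int)" where
  "tensA X Y = (\<Sum>p\<in>Poly_Mapping.keys X. \<Sum>q\<in>Poly_Mapping.keys Y.
      Poly_Mapping.single (fst p, snd p * fst q, snd q) (Poly_Mapping.lookup X p * Poly_Mapping.lookup Y q))"

end

theory Submission
  imports Defs
begin

(* Every map below is the additive extension (frag_extend) of a map on generators, so it is well
  defined on the tensor products as soon as it respects the generating relations.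
  The counit part is (e). For the comultiplication, Delta_t(x) is x m with t inserted between the
  two tensor factors, so Delta_t(mt) arises from sum_i m s_i m (x) t_i by inserting t.
  Contracting the first two factors of (a) against m _ m and using (d) gives
  sum_i m s_i m (x) t_i = m^2 t, hence Delta_t(mt) = sum_{i,k} m^2 s_i s_k (x) t_k (x) t_i.
  Multiplying the first two factors of (a) on the right by t identifies this with
  m^2 t^2 (x)_A t, and by (b) m^2 t^2 (x)_A t = m (t m) (x)_A t = mt (x)_A mt. *)

lemma frag_cmul_single: "frag_cmul c (Poly_Mapping.single x d) = Poly_Mapping.single x (c * d)"
  by (rule poly_mapping_eqI) (simp add: lookup_single when_def)

lemma frag_cmul_diff_distrib2: "frag_cmul c (a - b) = frag_cmul c a - frag_cmul c b"
  by (rule poly_mapping_eqI) (simp add: lookup_minus right_diff_distrib)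

lemma frag_extend_diff_fun:
  "frag_extend (\<lambda>x. g x - h x) X = frag_extend g X - frag_extend h X"
  by (simp add: frag_extend_def frag_cmul_diff_distrib2 sum_subtractf)

lemma tens2_rel_add: "x \<in> tens2_rel f \<Longrightarrow> y \<in> tens2_rel f \<Longrightarrow> x + y \<in> tens2_rel f"
  by (metis diff_0 diff_minus_eq_add tens2_rel.diff tens2_rel.zero)

lemma tens2_rel_sum: "(\<And>i. i \<in> I \<Longrightarrow> x i \<in> tens2_rel f) \<Longrightarrow> (\<Sum>i\<in>I. x i) \<in> tens2_rel f"
  by (induction I rule: infinite_finite_induct) (auto intro: tens2_rel_add tens2_rel.zero)

lemma tens3_rel_add: "x \<in> tens3_rel f \<Longrightarrow> y \<in> tens3_rel f \<Longrightarrow> x + y \<in> tens3_rel f"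
  by (metis diff_0 diff_minus_eq_add tens3_rel.diff tens3_rel.zero)

lemma tens3_rel_sum: "(\<And>i. i \<in> I \<Longrightarrow> x i \<in> tens3_rel f) \<Longrightarrow> (\<Sum>i\<in>I. x i) \<in> tens3_rel f"
  by (induction I rule: infinite_finite_induct) (auto intro: tens3_rel_add tens3_rel.zero)

lemma tens3_rel_frag_extend:
  assumes "\<And>q. h q \<in> tens3_rel f"
  shows "frag_extend h Y \<in> tens3_rel f"
  unfolding frag_extend_def
proof (rule tens3_rel_sum)
  fix q
  show "frag_cmul (Poly_Mapping.lookup Y q) (h q) \<in> tens3_rel f"
    using assms[of q]
    by (rule frag_closure_minus_cmul[where P = "\<lambda>x. x \<in> tens3_rel f", rotated 2])
      (rule tens3_rel.zero, erule (1) tens3_rel.diff)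
qed

lemma teq2_refl: "teq2 f x x"
  by (simp add: teq2_def tens2_rel.zero)

lemma teq2_sym: "teq2 f x y \<Longrightarrow> teq2 f y x"
  unfolding teq2_def by (drule tens2_rel.diff[OF tens2_rel.zero]) simp

lemma teq2_trans [trans]: "teq2 f x y \<Longrightarrow> teq2 f y z \<Longrightarrow> teq2 f x z"
  unfolding teq2_def by (drule (1) tens2_rel_add) (simp add: algebra_simps)

lemma teq2_add:
  assumes "teq2 f x y" and "teq2 f x' y'"
  shows "teq2 f (x + x') (y + y')"
proof -
  have eq: "(x + x') - (y + y') = (x - y) + (x' - y')"
    by (simp add: algebra_simps)
  show ?thesis
    using assms unfolding teq2_def eq by (rule tens2_rel_add)
qed

lemma teq2_sum: "(\<And>i. i \<in> I \<Longrightarrow> teq2 f (x i) (y i)) \<Longrightarrow> teq2 f (\<Sum>i\<in>I. x i) (\<Sum>i\<in>I. y i)"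
  unfolding teq2_def sum_subtractf[symmetric] by (rule tens2_rel_sum)

lemma teq3_sym: "teq3 f x y \<Longrightarrow> teq3 f y x"
  unfolding teq3_def by (drule tens3_rel.diff[OF tens3_rel.zero]) simp

lemma teq3_trans [trans]: "teq3 f x y \<Longrightarrow> teq3 f y z \<Longrightarrow> teq3 f x z"
  unfolding teq3_def by (drule (1) tens3_rel_add) (simp add: algebra_simps)

lemma teq2_gen2_add_left: "teq2 f (gen2 a c + gen2 a' c) (gen2 (a + a') c)"
  by (rule teq2_sym) (unfold teq2_def diff_diff_eq[symmetric], rule tens2_rel.addl)

lemma teq2_gen2_sum_left:
  "finite I \<Longrightarrow> teq2 f (\<Sum>i\<in>I. gen2 (a i) c) (gen2 (\<Sum>i\<in>I. a i) c)"
proof (induction I rule: finite_induct)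
  case empty
  have "gen2 (0 + 0) c - gen2 0 c - gen2 0 c \<in> tens2_rel f"
    by (rule tens2_rel.addl)
  then show ?case
    by (simp add: teq2_def)
next
  case (insert i I)
  show ?case
    unfolding sum.insert[OF insert.hyps]
    by (rule teq2_trans[OF teq2_add[OF teq2_refl insert.IH] teq2_gen2_add_left])
qed

lemma frag_extend_tens2_rel:
  assumes "X \<in> tens2_rel f"
    and "0 \<in> R" and "\<And>x y. x \<in> R \<Longrightarrow> y \<in> R \<Longrightarrow> x - y \<in> R"
    and "\<And>a a' c. g (a + a', c) - g (a, c) - g (a', c) \<in> R"
    and "\<And>a c c'. g (a, c + c') - g (a, c) - g (a, c') \<in> R"
    and "\<And>a b c. g (a * f b, c) - g (a, f b * c) \<in> R"
  shows "frag_extend g X \<in> R"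
  using assms(1) by induction (simp_all add: gen2_def frag_extend_diff assms(2-))

lemma frag_extend_tens3_rel:
  assumes "X \<in> tens3_rel f"
    and "0 \<in> R" and "\<And>x y. x \<in> R \<Longrightarrow> y \<in> R \<Longrightarrow> x - y \<in> R"
    and "\<And>a a' c d. g (a + a', c, d) - g (a, c, d) - g (a', c, d) \<in> R"
    and "\<And>a c c' d. g (a, c + c', d) - g (a, c, d) - g (a, c', d) \<in> R"
    and "\<And>a c d d'. g (a, c, d + d') - g (a, c, d) - g (a, c, d') \<in> R"
    and "\<And>a b c d. g (a * f b, c, d) - g (a, f b * c, d) \<in> R"
    and "\<And>a b c d. g (a, c * f b, d) - g (a, c, f b * d) \<in> R"
  shows "frag_extend g X \<in> R"
  using assms(1) by induction (simp_all add: gen3_def frag_extend_diff assms(2-))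

definition lmult2 :: "'a::ring_1 \<Rightarrow> (('a \<times> 'a) \<Rightarrow>\<^sub>0 int) \<Rightarrow> (('a \<times> 'a) \<Rightarrow>\<^sub>0 int)" where
  "lmult2 x = frag_extend (\<lambda>(a, c). gen2 (x * a) c)"

lemma teq2_lmult2: "teq2 f X Y \<Longrightarrow> teq2 f (lmult2 x X) (lmult2 x Y)"
  unfolding teq2_def lmult2_def frag_extend_diff[symmetric]
  by (erule frag_extend_tens2_rel[OF _ tens2_rel.zero tens2_rel.diff])
    (simp_all add: distrib_left mult.assoc[symmetric] tens2_rel.addl tens2_rel.addr tens2_rel.bal)

lemma lmult2_gen2_sum:
  fixes n :: nat
  shows "lmult2 x (\<Sum>i<n. gen2 (a i) (c i)) = (\<Sum>i<n. gen2 (x * a i) (c i))"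
  by (simp add: lmult2_def frag_extend_sum gen2_def)

lemma tensA_frag_extend:
  "tensA X Y = frag_extend (\<lambda>p. frag_extend (\<lambda>q. gen3 (fst p) (snd p * fst q) (snd q)) Y) X"
  by (simp add: tensA_def frag_extend_def frag_cmul_sum frag_cmul_single gen3_def)

lemma teq3_tensA_left: "teq2 f X X' \<Longrightarrow> teq3 f (tensA X Y) (tensA X' Y)"
  unfolding teq2_def teq3_def tensA_frag_extend frag_extend_diff[symmetric]
proof (erule frag_extend_tens2_rel[OF _ tens3_rel.zero tens3_rel.diff])
  fix a a' c
  show "frag_extend (\<lambda>q. gen3 (fst (a + a', c)) (snd (a + a', c) * fst q) (snd q)) Y
      - frag_extend (\<lambda>q. gen3 (fst (a, c)) (snd (a, c) * fst q) (snd q)) Y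
      - frag_extend (\<lambda>q. gen3 (fst (a', c)) (snd (a', c) * fst q) (snd q)) Y \<in> tens3_rel f"
    unfolding fst_conv snd_conv frag_extend_diff_fun[symmetric]
    by (intro tens3_rel_frag_extend tens3_rel.add1)
next
  fix a c c'
  show "frag_extend (\<lambda>q. gen3 (fst (a, c + c')) (snd (a, c + c') * fst q) (snd q)) Y
      - frag_extend (\<lambda>q. gen3 (fst (a, c)) (snd (a, c) * fst q) (snd q)) Y
      - frag_extend (\<lambda>q. gen3 (fst (a, c')) (snd (a, c') * fst q) (snd q)) Y \<in> tens3_rel f"
    unfolding fst_conv snd_conv frag_extend_diff_fun[symmetric] distrib_right
    by (intro tens3_rel_frag_extend tens3_rel.add2)
next
  fix a b c
  show "frag_extend (\<lambda>q. gen3 (fst (a * f b, c)) (snd (a * f b, c) * fst q) (snd q)) Y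
      - frag_extend (\<lambda>q. gen3 (fst (a, f b * c)) (snd (a, f b * c) * fst q) (snd q)) Y
      \<in> tens3_rel f"
    unfolding fst_conv snd_conv frag_extend_diff_fun[symmetric] mult.assoc
    by (intro tens3_rel_frag_extend tens3_rel.bal1)
qed

lemma tensA_gen2_sum:
  fixes n n' :: nat
  shows "tensA (\<Sum>i<n. gen2 (a i) (c i)) (\<Sum>j<n'. gen2 (a' j) (c' j))
    = (\<Sum>i<n. \<Sum>j<n'. gen3 (a i) (c i * a' j) (c' j))"
  by (simp add: tensA_frag_extend frag_extend_sum gen2_def gen3_def)

(* The B-centrality of t, pushed forward along a (x) c |-> x a (x) c y (x) z; every use of t_inv
  in a well-definedness proof goes through this. *)
lemma teq3_central_t:
  fixes n :: nat
  assumes "teq2 f (\<Sum>k<n. gen2 (f b * s k) (t k)) (\<Sum>k<n. gen2 (s k) (t k * f b))"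
  shows "teq3 f (\<Sum>k<n. gen3 (x * (f b * s k)) (t k * y) z) (\<Sum>k<n. gen3 (x * s k) (t k * f b * y) z)"
proof -
  have "tensA (\<Sum>k<n. gen2 (a k) (c k)) (gen2 y z) = (\<Sum>k<n. gen3 (a k) (c k * y) z)" for a c
    by (simp add: tensA_frag_extend frag_extend_sum gen2_def gen3_def)
  then show ?thesis
    using teq3_tensA_left[OF teq2_lmult2[OF assms], where Y = "gen2 y z"]
    by (simp only: lmult2_gen2_sum mult.assoc)
qed

definition insert_t :: "nat \<Rightarrow> (nat \<Rightarrow> 'a::ring_1) \<Rightarrow> (nat \<Rightarrow> 'a)
    \<Rightarrow> (('a \<times> 'a) \<Rightarrow>\<^sub>0 int) \<Rightarrow> (('a \<times> 'a \<times> 'a) \<Rightarrow>\<^sub>0 int)" where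
  "insert_t n s t = frag_extend (\<lambda>(a, c). \<Sum>k<n. gen3 (a * s k) (t k) c)"

lemma teq3_insert_t:
  assumes t_inv: "\<forall>b. teq2 f (\<Sum>k<n. gen2 (f b * s k) (t k)) (\<Sum>k<n. gen2 (s k) (t k * f b))"
    and "teq2 f X Y"
  shows "teq3 f (insert_t n s t X) (insert_t n s t Y)"
  using assms(2) unfolding teq2_def teq3_def insert_t_def frag_extend_diff[symmetric]
proof (rule frag_extend_tens2_rel[OF _ tens3_rel.zero tens3_rel.diff])
  fix a a' c
  show "(\<lambda>(a, c). \<Sum>k<n. gen3 (a * s k) (t k) c) (a + a', c)
      - (\<lambda>(a, c). \<Sum>k<n. gen3 (a * s k) (t k) c) (a, c)
      - (\<lambda>(a, c). \<Sum>k<n. gen3 (a * s k) (t k) c) (a', c) \<in> tens3_rel f"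
    by (simp add: sum_subtractf[symmetric] distrib_right tens3_rel_sum tens3_rel.add1)
next
  fix a c c'
  show "(\<lambda>(a, c). \<Sum>k<n. gen3 (a * s k) (t k) c) (a, c + c')
      - (\<lambda>(a, c). \<Sum>k<n. gen3 (a * s k) (t k) c) (a, c)
      - (\<lambda>(a, c). \<Sum>k<n. gen3 (a * s k) (t k) c) (a, c') \<in> tens3_rel f"
    by (simp add: sum_subtractf[symmetric] tens3_rel_sum tens3_rel.add3)
next
  fix a b c
  have "teq3 f (\<Sum>k<n. gen3 (a * (f b * s k)) (t k * 1) c) (\<Sum>k<n. gen3 (a * s k) (t k * f b * 1) c)"
    by (rule teq3_central_t[OF t_inv[rule_format]])
  also have "teq3 f (\<Sum>k<n. gen3 (a * s k) (t k * f b * 1) c) (\<Sum>k<n. gen3 (a * s k) (t k) (f b * c))"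
    unfolding teq3_def sum_subtractf[symmetric] mult_1_right by (intro tens3_rel_sum tens3_rel.bal2)
  finally show "(\<lambda>(a, c). \<Sum>k<n. gen3 (a * s k) (t k) c) (a * f b, c)
      - (\<lambda>(a, c). \<Sum>k<n. gen3 (a * s k) (t k) c) (a, f b * c) \<in> tens3_rel f"
    by (simp add: teq3_def mult.assoc)
qed

definition contract12 :: "'a::ring_1 \<Rightarrow> 'a \<Rightarrow> (('a \<times> 'a \<times> 'a) \<Rightarrow>\<^sub>0 int) \<Rightarrow> (('a \<times> 'a) \<Rightarrow>\<^sub>0 int)" where
  "contract12 x y = frag_extend (\<lambda>(a, c, d). gen2 (x * a * y * c) d)"

lemma teq2_contract12:
  assumes y_inv: "\<forall>b. f b * y = y * f b" and "teq3 f X Y"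
  shows "teq2 f (contract12 x y X) (contract12 x y Y)"
  using assms(2) unfolding teq2_def teq3_def contract12_def frag_extend_diff[symmetric]
proof (rule frag_extend_tens3_rel[OF _ tens2_rel.zero tens2_rel.diff])
  fix a b c d
  have "x * (a * f b) * y * c = x * a * y * (f b * c)"
    using y_inv by (simp add: mult.assoc)
  then show "(\<lambda>(a, c, d). gen2 (x * a * y * c) d) (a * f b, c, d)
      - (\<lambda>(a, c, d). gen2 (x * a * y * c) d) (a, f b * c, d) \<in> tens2_rel f"
    by (simp add: tens2_rel.zero)
qed (simp_all add: distrib_left distrib_right mult.assoc[symmetric]
    tens2_rel.addl tens2_rel.addr tens2_rel.bal)

(* (a (x) c (x) d) |-> ((x a (x) c) t) (x) d, with the product of (A (x)_B A)^B from the context. *)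
definition rmult_t12 :: "'a::ring_1 \<Rightarrow> nat \<Rightarrow> (nat \<Rightarrow> 'a) \<Rightarrow> (nat \<Rightarrow> 'a)
    \<Rightarrow> (('a \<times> 'a \<times> 'a) \<Rightarrow>\<^sub>0 int) \<Rightarrow> (('a \<times> 'a \<times> 'a) \<Rightarrow>\<^sub>0 int)" where
  "rmult_t12 x n s t = frag_extend (\<lambda>(a, c, d). \<Sum>k<n. gen3 (x * a * s k) (t k * c) d)"

lemma teq3_rmult_t12:
  assumes t_inv: "\<forall>b. teq2 f (\<Sum>k<n. gen2 (f b * s k) (t k)) (\<Sum>k<n. gen2 (s k) (t k * f b))"
    and "teq3 f X Y"
  shows "teq3 f (rmult_t12 x n s t X) (rmult_t12 x n s t Y)"
  using assms(2) unfolding teq3_def rmult_t12_def frag_extend_diff[symmetric]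
proof (rule frag_extend_tens3_rel[OF _ tens3_rel.zero tens3_rel.diff])
  fix a b c d
  have "teq3 f (\<Sum>k<n. gen3 ((x * a) * (f b * s k)) (t k * c) d)
      (\<Sum>k<n. gen3 ((x * a) * s k) (t k * f b * c) d)"
    by (rule teq3_central_t[OF t_inv[rule_format]])
  then show "(\<lambda>(a, c, d). \<Sum>k<n. gen3 (x * a * s k) (t k * c) d) (a * f b, c, d)
      - (\<lambda>(a, c, d). \<Sum>k<n. gen3 (x * a * s k) (t k * c) d) (a, f b * c, d) \<in> tens3_rel f"
    by (simp add: teq3_def mult.assoc)
next
  fix a b c d
  show "(\<lambda>(a, c, d). \<Sum>k<n. gen3 (x * a * s k) (t k * c) d) (a, c * f b, d)
      - (\<lambda>(a, c, d). \<Sum>k<n. gen3 (x * a * s k) (t k * c) d) (a, c, f b * d) \<in> tens3_rel f"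
    by (simp add: sum_subtractf[symmetric] mult.assoc[symmetric] tens3_rel_sum tens3_rel.bal2)
qed (simp_all add: sum_subtractf[symmetric] distrib_left distrib_right
    tens3_rel_sum tens3_rel.add1 tens3_rel.add2 tens3_rel.add3)

lemma comult_t_insert_t:
  "comult_t m n s t X = insert_t n s t (frag_extend (\<lambda>(a, c). gen2 (a * m) c) X)"
proof -
  have "comult_t m n s t X = frag_extend (\<lambda>p. \<Sum>j<n. gen3 (fst p * m * s j) (t j) (snd p)) X"
    by (simp add: comult_t_def frag_extend_def frag_cmul_sum frag_cmul_single gen3_def)
  also have "\<dots> = insert_t n s t (frag_extend (frag_of \<circ> (\<lambda>(a, c). (a * m, c))) X)"
    unfolding insert_t_def frag_extend_compose by (simp add: comp_def case_prod_beta)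
  also have "frag_of \<circ> (\<lambda>(a, c). (a * m, c)) = (\<lambda>(a, c). gen2 (a * m) c)"
    by (simp add: fun_eq_iff gen2_def)
  finally show ?thesis .
qed

lemma counit_t_add: "counit_t u (X + Y) = counit_t u X + counit_t u Y"
  unfolding counit_t_def by (rule setsum_keys_plus_distrib) (simp_all add: distrib_right)

lemma counit_t_gen2: "counit_t u (gen2 a c) = a * u * c"
  by (simp add: counit_t_def gen2_def)

lemma counit_t_gen2_sum: "counit_t u (\<Sum>i\<in>I. gen2 (a i) (c i)) = (\<Sum>i\<in>I. a i * u * c i)"
proof (induction I rule: infinite_finite_induct)
  case (insert i I)
  then show ?case
    by (simp add: counit_t_add counit_t_gen2)
qed (simp_all add: counit_t_def)

lemma teq2_mtm_m2t:
  fixes n :: nat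
  assumes m_inv: "\<forall>b. f b * m = m * f b"
    and a2: "teq3 f (\<Sum>i<n. \<Sum>j<n. gen3 (s i) (t i * s j) (t j)) (\<Sum>i<n. gen3 (s i) 1 (t i))"
    and d: "m * m = (\<Sum>i<n. m * s i * m * t i)"
  shows "teq2 f (\<Sum>i<n. gen2 (m * s i * m) (t i)) (\<Sum>i<n. gen2 (m * m * s i) (t i))"
proof -
  have "(\<Sum>i<n. gen2 (m * s i * m) (t i)) = contract12 m m (\<Sum>i<n. gen3 (s i) 1 (t i))"
    by (simp add: contract12_def frag_extend_sum gen2_def gen3_def)
  also have "teq2 f \<dots> (contract12 m m (\<Sum>i<n. \<Sum>j<n. gen3 (s i) (t i * s j) (t j)))"
    by (rule teq2_sym[OF teq2_contract12[OF m_inv a2]])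
  also have "\<dots> = (\<Sum>i<n. \<Sum>j<n. gen2 (m * s i * m * (t i * s j)) (t j))"
    by (simp add: contract12_def frag_extend_sum gen2_def gen3_def)
  also have "\<dots> = (\<Sum>j<n. \<Sum>i<n. gen2 (m * s i * m * (t i * s j)) (t j))"
    by (rule sum.swap)
  also have "teq2 f \<dots> (\<Sum>j<n. gen2 (m * m * s j) (t j))"
  proof (rule teq2_sum)
    fix j
    have "(\<Sum>i<n. m * s i * m * (t i * s j)) = m * m * s j"
      unfolding d sum_distrib_right by (simp add: mult.assoc)
    then show "teq2 f (\<Sum>i<n. gen2 (m * s i * m * (t i * s j)) (t j)) (gen2 (m * m * s j) (t j))"
      using teq2_gen2_sum_left[of "{..<n}" f "\<lambda>i. m * s i * m * (t i * s j)" "t j"] by simp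
  qed
  finally show ?thesis .
qed

lemma teq3_comult_mt:
  fixes n :: nat
  assumes t_inv: "\<forall>b. teq2 f (\<Sum>k<n. gen2 (f b * s k) (t k)) (\<Sum>k<n. gen2 (s k) (t k * f b))"
    and m_inv: "\<forall>b. f b * m = m * f b"
    and a2: "teq3 f (\<Sum>i<n. \<Sum>j<n. gen3 (s i) (t i * s j) (t j)) (\<Sum>i<n. gen3 (s i) 1 (t i))"
    and d: "m * m = (\<Sum>i<n. m * s i * m * t i)"
  shows "teq3 f (comult_t m n s t (\<Sum>i<n. gen2 (m * s i) (t i)))
    (\<Sum>i<n. \<Sum>k<n. gen3 (m * m * s i * s k) (t k) (t i))"
proof -
  have "comult_t m n s t (\<Sum>i<n. gen2 (m * s i) (t i)) = insert_t n s t (\<Sum>i<n. gen2 (m * s i * m) (t i))"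
    by (simp add: comult_t_insert_t frag_extend_sum gen2_def)
  also have "teq3 f \<dots> (insert_t n s t (\<Sum>i<n. gen2 (m * m * s i) (t i)))"
    by (rule teq3_insert_t[OF t_inv teq2_mtm_m2t[OF m_inv a2 d]])
  also have "\<dots> = (\<Sum>i<n. \<Sum>k<n. gen3 (m * m * s i * s k) (t k) (t i))"
    by (simp add: insert_t_def frag_extend_sum gen2_def gen3_def)
  finally show ?thesis .
qed

lemma teq3_tensA_mt_mt:
  fixes n :: nat
  assumes t_inv: "\<forall>b. teq2 f (\<Sum>k<n. gen2 (f b * s k) (t k)) (\<Sum>k<n. gen2 (s k) (t k * f b))"
    and a2: "teq3 f (\<Sum>i<n. \<Sum>j<n. gen3 (s i) (t i * s j) (t j)) (\<Sum>i<n. gen3 (s i) 1 (t i))"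
    and b: "teq2 f (\<Sum>i<n. gen2 (s i) (t i * m)) (\<Sum>i<n. \<Sum>j<n. gen2 (m * s i * s j) (t j * t i))"
  shows "teq3 f (\<Sum>i<n. \<Sum>k<n. gen3 (m * m * s i * s k) (t k) (t i))
    (tensA (\<Sum>i<n. gen2 (m * s i) (t i)) (\<Sum>i<n. gen2 (m * s i) (t i)))"
proof -
  let ?t = "\<Sum>k<n. gen2 (s k) (t k)"
  have "(\<Sum>i<n. \<Sum>k<n. gen3 (m * m * s i * s k) (t k) (t i))
      = rmult_t12 (m * m) n s t (\<Sum>i<n. gen3 (s i) 1 (t i))"
    by (simp add: rmult_t12_def frag_extend_sum gen3_def)
  also have "teq3 f \<dots> (rmult_t12 (m * m) n s t (\<Sum>i<n. \<Sum>j<n. gen3 (s i) (t i * s j) (t j)))"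
    by (rule teq3_sym[OF teq3_rmult_t12[OF t_inv a2]])
  also have "\<dots> = (\<Sum>i<n. \<Sum>j<n. \<Sum>k<n. gen3 (m * m * s i * s k) (t k * (t i * s j)) (t j))"
    by (simp add: rmult_t12_def frag_extend_sum gen3_def)
  also have "\<dots> = (\<Sum>i<n. \<Sum>k<n. \<Sum>j<n. gen3 (m * m * s i * s k) (t k * (t i * s j)) (t j))"
    by (rule sum.cong[OF refl], rule sum.swap)
  also have "\<dots> = tensA (lmult2 m (\<Sum>i<n. \<Sum>j<n. gen2 (m * s i * s j) (t j * t i))) ?t"
    by (simp add: lmult2_def tensA_frag_extend frag_extend_sum gen2_def gen3_def mult.assoc)
  also have "teq3 f \<dots> (tensA (lmult2 m (\<Sum>i<n. gen2 (s i) (t i * m))) ?t)"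
    by (rule teq3_tensA_left[OF teq2_lmult2[OF teq2_sym[OF b]]])
  also have "\<dots> = tensA (\<Sum>i<n. gen2 (m * s i) (t i)) (\<Sum>i<n. gen2 (m * s i) (t i))"
    by (simp add: lmult2_gen2_sum tensA_gen2_sum mult.assoc)
  finally show ?thesis .
qed

theorem lemma5p2:
  fixes \<iota>A :: "'k::comm_ring_1 \<Rightarrow> 'a::ring_1" and \<iota>B :: "'k \<Rightarrow> 'b::ring_1"
    and f :: "'b \<Rightarrow> 'a"
    and n :: nat and s t :: "nat \<Rightarrow> 'a" and m u :: 'a
  assumes kA: "is_alg_struct \<iota>A" and kB: "is_alg_struct \<iota>B"
    and f_hom: "is_ring_hom f" and f_k: "\<forall>c. f (\<iota>B c) = \<iota>A c"
    and t_inv: "\<forall>b. teq2 f (\<Sum>i<n. gen2 (f b * s i) (t i)) (\<Sum>i<n. gen2 (s i) (t i * f b))"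
    and m_inv: "\<forall>b. f b * m = m * f b"
    and u_inv: "\<forall>b. f b * u = u * f b"
    and a1: "(\<Sum>i<n. s i * t i) = 1"
    and a2: "teq3 f (\<Sum>i<n. \<Sum>j<n. gen3 (s i) (t i * s j) (t j)) (\<Sum>i<n. gen3 (s i) 1 (t i))"
    and b: "teq2 f (\<Sum>i<n. gen2 (s i) (t i * m)) (\<Sum>i<n. \<Sum>j<n. gen2 (m * s i * s j) (t j * t i))"
    and c: "teq2 f (\<Sum>i<n. gen2 (s i) (t i * u)) (gen2 u 1)"
    and d: "m * m = (\<Sum>i<n. m * s i * m * t i)"
    and e1: "m * u = 1" and e2: "(\<Sum>i<n. m * s i * u * t i) = 1"
  shows "counit_t u (\<Sum>i<n. gen2 (m * s i) (t i)) = 1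
    \<and> teq3 f (comult_t m n s t (\<Sum>i<n. gen2 (m * s i) (t i)))
             (tensA (\<Sum>i<n. gen2 (m * s i) (t i)) (\<Sum>i<n. gen2 (m * s i) (t i)))"
proof
  show "counit_t u (\<Sum>i<n. gen2 (m * s i) (t i)) = 1"
    using e2 by (simp add: counit_t_gen2_sum)
  show "teq3 f (comult_t m n s t (\<Sum>i<n. gen2 (m * s i) (t i)))
      (tensA (\<Sum>i<n. gen2 (m * s i) (t i)) (\<Sum>i<n. gen2 (m * s i) (t i)))"
    using teq3_comult_mt[OF t_inv m_inv a2 d] teq3_tensA_mt_mt[OF t_inv a2 b]
    by (rule teq3_trans)
qed

end
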